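(* Let $(X,\rho_X)$ be a symmetric rack, $(A,\phi,\psi,\eta)$ a constant-coefficient $(X,\rho_X)$-module, and $\alpha\in Z^2_{SR}((X,\rho_X);A)$. Then $\operatorname{Ker}(\Gamma)$ is isomorphic as a group to $$Z^1_{SR}((X,\rho_X);A)=\{\lambda:X\to A\mid \phi\lambda(x)-\lambda(x*y)+\psi\lambda(y)=0\text{ and }\eta\lambda(z)=\lambda(\rho_X(z))\text{ for all }x,y,z\in X\},$$ a group under pointwise addition.
   Context: A rack is a set $X$ with binary operation $*$ such that each $x\mapsto x*y$ is bijective (inverse $x\mapsto x*^{-1}y$) and $(x*y)*z=(x*z)*(y*z)$. A symmetric rack $(X,\rho_X)$ is a rack with $\rho_X:X\to X$ such that $\rho_X^2=\mathrm{id}$, $\rho_X(x*y)=\rho_X(x)*y$, $x*\rho_X(y)=x*^{-1}y$. $\operatorname{Aut}(X,\rho_X)$: bijections preserving $*$ and commuting with $\rho_X$. A constant-coefficient $(X,\rho_X)$-module $\mathcal F=(A,\phi,\psi,\eta)$: an abelian group $A$ with group automorphism $\phi$ and endomorphisms $\psi,\eta$ satisfying $\phi\psi=\psi\phi$, $\eta^2=\mathrm{id}$, $\eta\phi=\phi\eta$, $\eta\psi=\psi$, $\phi^2=\mathrm{id}$, $\psi=\phi\psi+\psi^2$, $\phi\psi\eta=-\psi$. $\operatorname{Aut}(A)$: group automorphisms of $A$ commuting with $\phi,\psi,\eta$. $Z^2_{SR}((X,\rho_X);A)$: maps $\alpha:X\times X\to A$ with, for all $x,y,z$: $-\phi\alpha(x,z)+\phi\alpha(x,y)+\alpha(x*y,z)-\alpha(x*z,y*z)-\psi\alpha(y,z)=0$,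 $\eta\alpha(x,y)=\alpha(\rho_X(x),y)$, $\phi\alpha(x*y,\rho_X(y))+\alpha(x,y)=0$. $E(\mathcal F,\alpha)$ is the symmetric rack on $X\times A$ with $(x,a)*(y,b)=(x*y,\phi(a)+\psi(b)+\alpha(x,y))$ and $\rho_{E(\mathcal F,\alpha)}(x,a)=(\rho_X(x),\eta(a))$. $\operatorname{Aut}_A(E(\mathcal F,\alpha),\rho_{E(\mathcal F,\alpha)})$ is the group of symmetric rack automorphisms $\xi$ of it of the form $\xi(x,s)=(\zeta(x),\lambda(x)+\theta(s))$ with $(\zeta,\theta)\in\operatorname{Aut}(X,\rho_X)\times\operatorname{Aut}(A)$ and $\lambda:X\to A$ a map; $\Gamma:\operatorname{Aut}_A(E(\mathcal F,\alpha),\rho_{E(\mathcal F,\alpha)})\to\operatorname{Aut}(X,\rho_X)\times\operatorname{Aut}(A)$ is the group homomorphism $\Gamma(\xi)=(\zeta,\theta)$. *)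

theory Defs
  imports "HOL-Algebra.Coset"
begin

(* The underlying set X of the rack is the (nonempty) type 'x; the abelian group A is
   the type 'a :: ab_group_add. *)

definition rack :: "('x \<Rightarrow> 'x \<Rightarrow> 'x) \<Rightarrow> bool" where
  "rack op \<longleftrightarrow> (\<forall>y. bij (\<lambda>x. op x y)) \<and>
     (\<forall>x y z. op (op x y) z = op (op x z) (op y z))"

definition rack_inv :: "('x \<Rightarrow> 'x \<Rightarrow> 'x) \<Rightarrow> 'x \<Rightarrow> 'x \<Rightarrow> 'x" where
  "rack_inv op x y = Hilbert_Choice.inv (\<lambda>u. op u y) x"

definition symmetric_rack :: "('x \<Rightarrow> 'x \<Rightarrow> 'x) \<Rightarrow> ('x \<Rightarrow> 'x) \<Rightarrow> bool" where
  "symmetric_rack op \<rho> \<longleftrightarrow> rack op \<and> (\<forall>x. \<rho> (\<rho> x) = x) \<and>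
     (\<forall>x y. \<rho> (op x y) = op (\<rho> x) y) \<and> (\<forall>x y. op x (\<rho> y) = rack_inv op x y)"

definition sr_aut :: "('x \<Rightarrow> 'x \<Rightarrow> 'x) \<Rightarrow> ('x \<Rightarrow> 'x) \<Rightarrow> ('x \<Rightarrow> 'x) \<Rightarrow> bool" where
  "sr_aut op \<rho> f \<longleftrightarrow> bij f \<and> (\<forall>x y. f (op x y) = op (f x) (f y)) \<and> (\<forall>x. f (\<rho> x) = \<rho> (f x))"

definition Aut_SR :: "('x \<Rightarrow> 'x \<Rightarrow> 'x) \<Rightarrow> ('x \<Rightarrow> 'x) \<Rightarrow> ('x \<Rightarrow> 'x) monoid" where
  "Aut_SR op \<rho> = \<lparr>carrier = {f. sr_aut op \<rho> f}, mult = (\<circ>), one = id\<rparr>"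

definition additive_map :: "('a::ab_group_add \<Rightarrow> 'a) \<Rightarrow> bool" where
  "additive_map f \<longleftrightarrow> (\<forall>a b. f (a + b) = f a + f b)"

definition cc_module :: "('a::ab_group_add \<Rightarrow> 'a) \<Rightarrow> ('a \<Rightarrow> 'a) \<Rightarrow> ('a \<Rightarrow> 'a) \<Rightarrow> bool" where
  "cc_module \<phi> \<psi> \<eta> \<longleftrightarrow> bij \<phi> \<and> additive_map \<phi> \<and> additive_map \<psi> \<and> additive_map \<eta> \<and>
     (\<forall>a. \<phi> (\<psi> a) = \<psi> (\<phi> a)) \<and> (\<forall>a. \<eta> (\<eta> a) = a) \<and> (\<forall>a. \<eta> (\<phi> a) = \<phi> (\<eta> a)) \<and>
     (\<forall>a. \<eta> (\<psi> a) = \<psi> a) \<and> (\<forall>a. \<phi> (\<phi> a) = a) \<and>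
     (\<forall>a. \<psi> a = \<phi> (\<psi> a) + \<psi> (\<psi> a)) \<and> (\<forall>a. \<phi> (\<psi> (\<eta> a)) = - \<psi> a)"

definition Aut_Mod :: "('a::ab_group_add \<Rightarrow> 'a) \<Rightarrow> ('a \<Rightarrow> 'a) \<Rightarrow> ('a \<Rightarrow> 'a) \<Rightarrow> ('a \<Rightarrow> 'a) monoid" where
  "Aut_Mod \<phi> \<psi> \<eta> = \<lparr>carrier = {t. bij t \<and> additive_map t \<and>
       (\<forall>a. t (\<phi> a) = \<phi> (t a)) \<and> (\<forall>a. t (\<psi> a) = \<psi> (t a)) \<and> (\<forall>a. t (\<eta> a) = \<eta> (t a))},
     mult = (\<circ>), one = id\<rparr>"

definition Z2_SR :: "('x \<Rightarrow> 'x \<Rightarrow> 'x) \<Rightarrow> ('x \<Rightarrow> 'x) \<Rightarrow> ('a::ab_group_add \<Rightarrow> 'a) \<Rightarrow> ('a \<Rightarrow> 'a) \<Rightarrow> ('a \<Rightarrow> 'a)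
     \<Rightarrow> ('x \<Rightarrow> 'x \<Rightarrow> 'a) set" where
  "Z2_SR op \<rho> \<phi> \<psi> \<eta> = {\<alpha>.
     (\<forall>x y z. - \<phi> (\<alpha> x z) + \<phi> (\<alpha> x y) + \<alpha> (op x y) z - \<alpha> (op x z) (op y z) - \<psi> (\<alpha> y z) = 0) \<and>
     (\<forall>x y. \<eta> (\<alpha> x y) = \<alpha> (\<rho> x) y) \<and>
     (\<forall>x y. \<phi> (\<alpha> (op x y) (\<rho> y)) + \<alpha> x y = 0)}"

definition Z1_SR :: "('x \<Rightarrow> 'x \<Rightarrow> 'x) \<Rightarrow> ('x \<Rightarrow> 'x) \<Rightarrow> ('a::ab_group_add \<Rightarrow> 'a) \<Rightarrow> ('a \<Rightarrow> 'a) \<Rightarrow> ('a \<Rightarrow> 'a)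
     \<Rightarrow> ('x \<Rightarrow> 'a) set" where
  "Z1_SR op \<rho> \<phi> \<psi> \<eta> = {l.
     (\<forall>x y. \<phi> (l x) - l (op x y) + \<psi> (l y) = 0) \<and> (\<forall>z. \<eta> (l z) = l (\<rho> z))}"

definition Z1_group :: "('x \<Rightarrow> 'x \<Rightarrow> 'x) \<Rightarrow> ('x \<Rightarrow> 'x) \<Rightarrow> ('a::ab_group_add \<Rightarrow> 'a) \<Rightarrow> ('a \<Rightarrow> 'a) \<Rightarrow> ('a \<Rightarrow> 'a)
     \<Rightarrow> ('x \<Rightarrow> 'a) monoid" where
  "Z1_group op \<rho> \<phi> \<psi> \<eta> = \<lparr>carrier = Z1_SR op \<rho> \<phi> \<psi> \<eta>, mult = (\<lambda>f g x. f x + g x), one = (\<lambda>x. 0)\<rparr>"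

(* the extension E(F, alpha): operation and involution on X x A *)
definition E_op :: "('x \<Rightarrow> 'x \<Rightarrow> 'x) \<Rightarrow> ('a::ab_group_add \<Rightarrow> 'a) \<Rightarrow> ('a \<Rightarrow> 'a) \<Rightarrow> ('x \<Rightarrow> 'x \<Rightarrow> 'a)
     \<Rightarrow> 'x \<times> 'a \<Rightarrow> 'x \<times> 'a \<Rightarrow> 'x \<times> 'a" where
  "E_op op \<phi> \<psi> \<alpha> p q = (op (fst p) (fst q), \<phi> (snd p) + \<psi> (snd q) + \<alpha> (fst p) (fst q))"

definition E_rho :: "('x \<Rightarrow> 'x) \<Rightarrow> ('a \<Rightarrow> 'a) \<Rightarrow> 'x \<times> 'a \<Rightarrow> 'x \<times> 'a" where
  "E_rho \<rho> \<eta> p = (\<rho> (fst p), \<eta> (snd p))"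

definition A_form :: "('x \<Rightarrow> 'x \<Rightarrow> 'x) \<Rightarrow> ('x \<Rightarrow> 'x) \<Rightarrow> ('a::ab_group_add \<Rightarrow> 'a) \<Rightarrow> ('a \<Rightarrow> 'a) \<Rightarrow> ('a \<Rightarrow> 'a)
     \<Rightarrow> ('x \<times> 'a \<Rightarrow> 'x \<times> 'a) \<Rightarrow> ('x \<Rightarrow> 'x) \<Rightarrow> ('a \<Rightarrow> 'a) \<Rightarrow> bool" where
  "A_form op \<rho> \<phi> \<psi> \<eta> \<xi> \<zeta> \<theta> \<longleftrightarrow> \<zeta> \<in> carrier (Aut_SR op \<rho>) \<and> \<theta> \<in> carrier (Aut_Mod \<phi> \<psi> \<eta>) \<and>
     (\<exists>l. \<forall>x s. \<xi> (x, s) = (\<zeta> x, l x + \<theta> s))"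

definition Aut_A :: "('x \<Rightarrow> 'x \<Rightarrow> 'x) \<Rightarrow> ('x \<Rightarrow> 'x) \<Rightarrow> ('a::ab_group_add \<Rightarrow> 'a) \<Rightarrow> ('a \<Rightarrow> 'a) \<Rightarrow> ('a \<Rightarrow> 'a)
     \<Rightarrow> ('x \<Rightarrow> 'x \<Rightarrow> 'a) \<Rightarrow> ('x \<times> 'a \<Rightarrow> 'x \<times> 'a) monoid" where
  "Aut_A op \<rho> \<phi> \<psi> \<eta> \<alpha> = \<lparr>carrier = {\<xi>. sr_aut (E_op op \<phi> \<psi> \<alpha>) (E_rho \<rho> \<eta>) \<xi> \<and>
       (\<exists>\<zeta> \<theta>. A_form op \<rho> \<phi> \<psi> \<eta> \<xi> \<zeta> \<theta>)},
     mult = (\<circ>), one = id\<rparr>"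

definition Gamma :: "('x \<Rightarrow> 'x \<Rightarrow> 'x) \<Rightarrow> ('x \<Rightarrow> 'x) \<Rightarrow> ('a::ab_group_add \<Rightarrow> 'a) \<Rightarrow> ('a \<Rightarrow> 'a) \<Rightarrow> ('a \<Rightarrow> 'a)
     \<Rightarrow> ('x \<times> 'a \<Rightarrow> 'x \<times> 'a) \<Rightarrow> ('x \<Rightarrow> 'x) \<times> ('a \<Rightarrow> 'a)" where
  "Gamma op \<rho> \<phi> \<psi> \<eta> \<xi> = (THE p. A_form op \<rho> \<phi> \<psi> \<eta> \<xi> (fst p) (snd p))"

end

theory Submission
  imports Defs
begin

text \<open>An automorphism in the kernel of \<open>\<Gamma>\<close> has the form \<open>(x, s) \<mapsto> (x, \<lambda>(x) + s)\<close>.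
  Compatibility with the operation of \<open>E(\<F>, \<alpha>)\<close> says exactly
  \<open>\<lambda>(x * y) = \<phi>(\<lambda> x) + \<psi>(\<lambda> y)\<close>, since the cocycle term \<open>\<alpha>(x, y)\<close> appears on both sides and
  cancels; compatibility with \<open>\<rho>\<close> says \<open>\<eta> \<lambda> = \<lambda> \<rho>\<close>. So the kernel consists precisely of the
  shears by 1-cocycles, and composing shears adds the cocycles.\<close>

definition shear :: "('x \<Rightarrow> 'a::ab_group_add) \<Rightarrow> 'x \<times> 'a \<Rightarrow> 'x \<times> 'a" where
  "shear l p = (fst p, l (fst p) + snd p)"

lemma shear_Pair: "shear l (x, s) = (x, l x + s)"
  by (simp add: shear_def)

lemma shear_comp: "shear l \<circ> shear l' = shear (\<lambda>x. l x + l' x)"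
  by (auto simp: shear_def add.assoc)

lemma bij_shear: "bij (shear l)"
  by (rule bij_betw_byWitness[where f' = "shear (\<lambda>x. - l x)"]) (auto simp: shear_def)

lemma additive_map_zero: "additive_map t \<Longrightarrow> t 0 = 0"
  unfolding additive_map_def by (metis add_cancel_right_right)

lemma shear_E_op_hom_iff:
  assumes "additive_map \<phi>" and "additive_map \<psi>"
  shows "(\<forall>p q. shear l (E_op op \<phi> \<psi> \<alpha> p q) = E_op op \<phi> \<psi> \<alpha> (shear l p) (shear l q))
    \<longleftrightarrow> (\<forall>x y. l (op x y) = \<phi> (l x) + \<psi> (l y))"
proof
  assume hom: "\<forall>p q. shear l (E_op op \<phi> \<psi> \<alpha> p q) = E_op op \<phi> \<psi> \<alpha> (shear l p) (shear l q)"
  show "\<forall>x y. l (op x y) = \<phi> (l x) + \<psi> (l y)"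
  proof (intro allI)
    fix x y
    from hom have "shear l (E_op op \<phi> \<psi> \<alpha> (x, 0) (y, 0)) = E_op op \<phi> \<psi> \<alpha> (shear l (x, 0)) (shear l (y, 0))"
      by blast
    then show "l (op x y) = \<phi> (l x) + \<psi> (l y)"
      using additive_map_zero[OF assms(1)] additive_map_zero[OF assms(2)]
      by (simp add: E_op_def shear_Pair)
  qed
next
  assume "\<forall>x y. l (op x y) = \<phi> (l x) + \<psi> (l y)"
  then show "\<forall>p q. shear l (E_op op \<phi> \<psi> \<alpha> p q) = E_op op \<phi> \<psi> \<alpha> (shear l p) (shear l q)"
    using assms by (simp add: E_op_def shear_def additive_map_def algebra_simps)
qed

lemma shear_E_rho_commute_iff:
  assumes "additive_map \<eta>"
  shows "(\<forall>p. shear l (E_rho \<rho> \<eta> p) = E_rho \<rho> \<eta> (shear l p)) \<longleftrightarrow> (\<forall>z. \<eta> (l z) = l (\<rho> z))"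
proof
  assume "\<forall>p. shear l (E_rho \<rho> \<eta> p) = E_rho \<rho> \<eta> (shear l p)"
  then have "shear l (E_rho \<rho> \<eta> (z, 0)) = E_rho \<rho> \<eta> (shear l (z, 0))" for z
    by blast
  then show "\<forall>z. \<eta> (l z) = l (\<rho> z)"
    using additive_map_zero[OF assms] by (simp add: E_rho_def shear_Pair)
next
  assume "\<forall>z. \<eta> (l z) = l (\<rho> z)"
  then show "\<forall>p. shear l (E_rho \<rho> \<eta> p) = E_rho \<rho> \<eta> (shear l p)"
    using assms by (simp add: E_rho_def shear_def additive_map_def)
qed

lemma sr_aut_shear_iff:
  assumes "cc_module \<phi> \<psi> \<eta>"
  shows "sr_aut (E_op op \<phi> \<psi> \<alpha>) (E_rho \<rho> \<eta>) (shear l) \<longleftrightarrow> l \<in> Z1_SR op \<rho> \<phi> \<psi> \<eta>"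
proof -
  have additive: "additive_map \<phi>" "additive_map \<psi>" "additive_map \<eta>"
    using assms by (auto simp: cc_module_def)
  have "sr_aut (E_op op \<phi> \<psi> \<alpha>) (E_rho \<rho> \<eta>) (shear l) \<longleftrightarrow>
      (\<forall>p q. shear l (E_op op \<phi> \<psi> \<alpha> p q) = E_op op \<phi> \<psi> \<alpha> (shear l p) (shear l q)) \<and>
      (\<forall>p. shear l (E_rho \<rho> \<eta> p) = E_rho \<rho> \<eta> (shear l p))"
    using bij_shear unfolding sr_aut_def by blast
  also have "\<dots> \<longleftrightarrow> (\<forall>x y. l (op x y) = \<phi> (l x) + \<psi> (l y)) \<and> (\<forall>z. \<eta> (l z) = l (\<rho> z))"
    by (simp only: shear_E_op_hom_iff[OF additive(1,2)] shear_E_rho_commute_iff[OF additive(3)])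
  also have "\<dots> \<longleftrightarrow> l \<in> Z1_SR op \<rho> \<phi> \<psi> \<eta>"
  proof -
    have "c = a + b \<longleftrightarrow> a - c + b = 0" for a b c :: 'a
      by (metis add.commute diff_add_eq eq_iff_diff_eq_0)
    then show ?thesis
      by (simp add: Z1_SR_def)
  qed
  finally show ?thesis .
qed

lemma A_form_unique:
  assumes "A_form op \<rho> \<phi> \<psi> \<eta> \<xi> \<zeta> \<theta>" and "A_form op \<rho> \<phi> \<psi> \<eta> \<xi> \<zeta>' \<theta>'"
  shows "\<zeta> = \<zeta>'" and "\<theta> = \<theta>'"
proof -
  obtain l where l: "\<And>x s. \<xi> (x, s) = (\<zeta> x, l x + \<theta> s)" and "additive_map \<theta>"
    using assms(1) unfolding A_form_def Aut_Mod_def by auto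
  obtain l' where l': "\<And>x s. \<xi> (x, s) = (\<zeta>' x, l' x + \<theta>' s)" and "additive_map \<theta>'"
    using assms(2) unfolding A_form_def Aut_Mod_def by auto
  have "\<zeta> x = \<zeta>' x" and "l x = l' x" for x
    using l[of x 0] l'[of x 0] \<open>additive_map \<theta>\<close> \<open>additive_map \<theta>'\<close> by (simp_all add: additive_map_zero)
  moreover have "\<theta> s = \<theta>' s" for s
    using l[of undefined s] l'[of undefined s] \<open>l undefined = l' undefined\<close> by simp
  ultimately show "\<zeta> = \<zeta>'" and "\<theta> = \<theta>'"
    by (simp_all add: fun_eq_iff)
qed

lemma Gamma_eqI:
  assumes "A_form op \<rho> \<phi> \<psi> \<eta> \<xi> \<zeta> \<theta>"
  shows "Gamma op \<rho> \<phi> \<psi> \<eta> \<xi> = (\<zeta>, \<theta>)"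
  unfolding Gamma_def
proof (rule the_equality)
  show "A_form op \<rho> \<phi> \<psi> \<eta> \<xi> (fst (\<zeta>, \<theta>)) (snd (\<zeta>, \<theta>))"
    using assms by simp
  show "p = (\<zeta>, \<theta>)" if "A_form op \<rho> \<phi> \<psi> \<eta> \<xi> (fst p) (snd p)" for p
    using A_form_unique[OF that assms] by (simp add: prod_eq_iff)
qed

lemma A_form_id_id_iff: "A_form op \<rho> \<phi> \<psi> \<eta> \<xi> id id \<longleftrightarrow> (\<exists>l. \<xi> = shear l)"
proof -
  have "id \<in> carrier (Aut_SR op \<rho>)" and "id \<in> carrier (Aut_Mod \<phi> \<psi> \<eta>)"
    by (auto simp: Aut_SR_def Aut_Mod_def sr_aut_def additive_map_def)
  moreover have "(\<forall>x s. \<xi> (x, s) = (x, l x + s)) \<longleftrightarrow> \<xi> = shear l" for l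
    by (auto simp: shear_def)
  ultimately show ?thesis
    by (simp add: A_form_def)
qed

lemma mem_kernel_Gamma_iff:
  "\<xi> \<in> kernel (Aut_A op \<rho> \<phi> \<psi> \<eta> \<alpha>) (Aut_SR op \<rho> \<times>\<times> Aut_Mod \<phi> \<psi> \<eta>) (Gamma op \<rho> \<phi> \<psi> \<eta>)
    \<longleftrightarrow> sr_aut (E_op op \<phi> \<psi> \<alpha>) (E_rho \<rho> \<eta>) \<xi> \<and> A_form op \<rho> \<phi> \<psi> \<eta> \<xi> id id"
proof
  assume "\<xi> \<in> kernel (Aut_A op \<rho> \<phi> \<psi> \<eta> \<alpha>) (Aut_SR op \<rho> \<times>\<times> Aut_Mod \<phi> \<psi> \<eta>) (Gamma op \<rho> \<phi> \<psi> \<eta>)"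
  then obtain \<zeta> \<theta> where "sr_aut (E_op op \<phi> \<psi> \<alpha>) (E_rho \<rho> \<eta>) \<xi>"
    and "A_form op \<rho> \<phi> \<psi> \<eta> \<xi> \<zeta> \<theta>" and "Gamma op \<rho> \<phi> \<psi> \<eta> \<xi> = (id, id)"
    by (auto simp: kernel_def DirProd_def Aut_A_def Aut_SR_def Aut_Mod_def)
  moreover from this have "(\<zeta>, \<theta>) = (id, id)"
    by (simp add: Gamma_eqI)
  ultimately show "sr_aut (E_op op \<phi> \<psi> \<alpha>) (E_rho \<rho> \<eta>) \<xi> \<and> A_form op \<rho> \<phi> \<psi> \<eta> \<xi> id id"
    by simp
next
  assume "sr_aut (E_op op \<phi> \<psi> \<alpha>) (E_rho \<rho> \<eta>) \<xi> \<and> A_form op \<rho> \<phi> \<psi> \<eta> \<xi> id id"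
  then show "\<xi> \<in> kernel (Aut_A op \<rho> \<phi> \<psi> \<eta> \<alpha>) (Aut_SR op \<rho> \<times>\<times> Aut_Mod \<phi> \<psi> \<eta>) (Gamma op \<rho> \<phi> \<psi> \<eta>)"
    by (auto simp: kernel_def DirProd_def Aut_A_def Aut_SR_def Aut_Mod_def Gamma_eqI)
qed

lemma kernel_Gamma_eq_shears:
  assumes "cc_module \<phi> \<psi> \<eta>"
  shows "kernel (Aut_A op \<rho> \<phi> \<psi> \<eta> \<alpha>) (Aut_SR op \<rho> \<times>\<times> Aut_Mod \<phi> \<psi> \<eta>) (Gamma op \<rho> \<phi> \<psi> \<eta>)
    = shear ` Z1_SR op \<rho> \<phi> \<psi> \<eta>"
  by (auto simp: mem_kernel_Gamma_iff A_form_id_id_iff sr_aut_shear_iff[OF assms])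

theorem proposition6p6:
  fixes op :: "'x \<Rightarrow> 'x \<Rightarrow> 'x" and \<rho> :: "'x \<Rightarrow> 'x"
    and \<phi> \<psi> \<eta> :: "'a::ab_group_add \<Rightarrow> 'a" and \<alpha> :: "'x \<Rightarrow> 'x \<Rightarrow> 'a"
  assumes "symmetric_rack op \<rho>"
    and "cc_module \<phi> \<psi> \<eta>"
    and "\<alpha> \<in> Z2_SR op \<rho> \<phi> \<psi> \<eta>"
  shows "(Aut_A op \<rho> \<phi> \<psi> \<eta> \<alpha>)\<lparr>carrier := kernel (Aut_A op \<rho> \<phi> \<psi> \<eta> \<alpha>)
            (Aut_SR op \<rho> \<times>\<times> Aut_Mod \<phi> \<psi> \<eta>) (Gamma op \<rho> \<phi> \<psi> \<eta>)\<rparr>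
         \<cong> Z1_group op \<rho> \<phi> \<psi> \<eta>"
proof -
  let ?Z = "Z1_SR op \<rho> \<phi> \<psi> \<eta>"
  define fiber_part :: "('x \<times> 'a \<Rightarrow> 'x \<times> 'a) \<Rightarrow> 'x \<Rightarrow> 'a"
    where "fiber_part \<xi> x = snd (\<xi> (x, 0))" for \<xi> x
  have fiber_part_shear: "fiber_part (shear l) = l" for l
    by (simp add: fiber_part_def shear_Pair fun_eq_iff)
  have "bij_betw fiber_part (shear ` ?Z) ?Z"
    by (rule bij_betw_byWitness[where f' = shear]) (auto simp: fiber_part_shear)
  moreover have "fiber_part (\<xi> \<circ> \<xi>') = (\<lambda>x. fiber_part \<xi> x + fiber_part \<xi>' x)"
    if "\<xi> \<in> shear ` ?Z" "\<xi>' \<in> shear ` ?Z" for \<xi> \<xi>'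
    using that by (auto simp: shear_comp fiber_part_shear)
  ultimately have "fiber_part \<in> iso ((Aut_A op \<rho> \<phi> \<psi> \<eta> \<alpha>)\<lparr>carrier := shear ` ?Z\<rparr>)
      (Z1_group op \<rho> \<phi> \<psi> \<eta>)"
    by (auto simp: iso_def hom_def Aut_A_def Z1_group_def dest: bij_betwE)
  then show ?thesis
    unfolding kernel_Gamma_eq_shears[OF assms(2)] by (rule is_isoI)
qed

end
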